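(* In the setup of the context, let $B=(b_i)_{i=1}^n$ and $B'=(b'_i)_{i=1}^n$ be two $\ast$-symmetric bases of $H$ with $b'_i=\sum_jA_{ij}b_j$, and let $J$, $J'$ be the asymptotic algebras built from $B$ and $B'$ (bases $(t_i)$, $(t'_i)$, traces $\bar\tau,\bar\tau'$). Then $A\in O_n(\mathcal O)$, and the $F$-linear map $\alpha:J\to J'$, $\alpha(t_x):=\sum_i\bar A_{ix}t'_i$ (with $\bar A$ the reduction of $A$ modulo $\mathfrak m$) satisfies: (a) $\alpha$ is an isomorphism of $F$-algebras; (b) $\bar\tau'\circ\alpha=\bar\tau$; (c) $\alpha(u^\ast)=\alpha(u)^\ast$ for all $u\in J$.
   Context: Setup: $\Gamma$ totally ordered abelian group; $K$ field with surjective valuation $\nu$, valuation ring $\mathcal O$, maximal ideal $\mathfrak m$, formally real residue field $F$. $H$ finite-dimensional split semisimple symmetric $K$-algebra with trace form $\tau$ and $K$-linear involutive antiautomorphism $\ast$; a $\ast$-symmetric basis is a basis $B$ with $B^\ast=B$ and $\tau(bc^\ast)=\delta_{bc}$. With $\Lambda$, $\chi_\lambda$, $c_\lambda$ ($\tau=\sum c_\lambda^{-1}\chi_\lambda$), $a_\lambda=-\tfrac12\nu(c_\lambda)\in\Gamma$, a fixed homomorphism $\gamma\mapsto v^\gamma$ from $\langle a_\lambda\rangle$ to $K^\times$ with $\nu(v^\gamma)=\gamma$, $f_\lambda=v^{2a_\lambda}c_\lambda$, and balanced representations $\rho_\lambda$ (irreducible of type $\lambda$ with $\nu(\rho_\lambda(b))\ge-a_\lambda$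 on every $\ast$-symmetric basis) with leading coefficients $c^\lambda(x)=v^{a_\lambda}\rho_\lambda(x)\bmod\mathfrak m$, the asymptotic algebra of a $\ast$-symmetric basis $B$ is the $F$-algebra $J$ with basis $(t_x)_{x\in B}$, product $t_xt_y=\sum_z\gamma_{x,y,z}t_{z^\ast}$ where $\gamma_{x,y,z}=\sum_\lambda\sum_{\mathfrak{s,t,u}}f_\lambda^{-1}c^\lambda(x)_{\mathfrak{st}}c^\lambda(y)_{\mathfrak{tu}}c^\lambda(z)_{\mathfrak{us}}$, trace form $\bar\tau(t_x)=n_x:=\sum_\lambda\sum_{\mathfrak s}f_\lambda^{-1}c^\lambda(x^\ast)_{\mathfrak{ss}}$, and involution $t_x^\ast=t_{x^\ast}$. *)

theory Defs
  imports Main "Jordan_Normal_Form.Matrix"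
begin

text \<open>A valuation is modelled as a function on the nonzero elements of the field;
  its value at 0 is irrelevant (conventionally infinity).
  valge nu x g means nu(x) >= g, with nu(0) = infinity.\<close>

definition valge :: "('k::field \<Rightarrow> 'g::linordered_ab_group_add) \<Rightarrow> 'k \<Rightarrow> 'g \<Rightarrow> bool" where
  "valge \<nu> x g \<longleftrightarrow> x = 0 \<or> g \<le> \<nu> x"

definition surj_valuation :: "('k::field \<Rightarrow> 'g::linordered_ab_group_add) \<Rightarrow> bool" where
  "surj_valuation \<nu> \<longleftrightarrow>
     (\<forall>x y. x \<noteq> 0 \<longrightarrow> y \<noteq> 0 \<longrightarrow> \<nu> (x * y) = \<nu> x + \<nu> y) \<and>
     (\<forall>x y. x \<noteq> 0 \<longrightarrow> y \<noteq> 0 \<longrightarrow> x + y \<noteq> 0 \<longrightarrow> min (\<nu> x) (\<nu> y) \<le> \<nu> (x + y)) \<and>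
     (\<forall>g. \<exists>x. x \<noteq> 0 \<and> \<nu> x = g)"

definition val_ring :: "('k::field \<Rightarrow> 'g::linordered_ab_group_add) \<Rightarrow> 'k set" where
  "val_ring \<nu> = {x. valge \<nu> x 0}"

definition val_ideal :: "('k::field \<Rightarrow> 'g::linordered_ab_group_add) \<Rightarrow> 'k set" where
  "val_ideal \<nu> = {x. x = 0 \<or> 0 < \<nu> x}"

text \<open>pi is the reduction map O -> F = O/m: a surjective ring homomorphism on O with
  kernel m (values outside O are irrelevant).\<close>

definition residue_map :: "('k::field \<Rightarrow> 'g::linordered_ab_group_add) \<Rightarrow> ('k \<Rightarrow> 'f::field) \<Rightarrow> bool" where
  "residue_map \<nu> \<pi> \<longleftrightarrow>
     (\<forall>x\<in>val_ring \<nu>. \<forall>y\<in>val_ring \<nu>. \<pi> (x + y) = \<pi> x + \<pi> y \<and> \<pi> (x * y) = \<pi> x * \<pi> y) \<and>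
     \<pi> 1 = 1 \<and> \<pi> ` val_ring \<nu> = UNIV \<and>
     (\<forall>x\<in>val_ring \<nu>. \<pi> x = 0 \<longleftrightarrow> x \<in> val_ideal \<nu>)"

definition formally_real :: "'f::field itself \<Rightarrow> bool" where
  "formally_real _ \<longleftrightarrow> (\<forall>xs :: 'f list. sum_list (map (\<lambda>x. x ^ 2) xs) \<noteq> -1)"

inductive_set gen_subgroup :: "'g::ab_group_add set \<Rightarrow> 'g set" for S where
  zero: "0 \<in> gen_subgroup S"
| gen: "x \<in> S \<Longrightarrow> x \<in> gen_subgroup S"
| add: "x \<in> gen_subgroup S \<Longrightarrow> y \<in> gen_subgroup S \<Longrightarrow> x + y \<in> gen_subgroup S"
| neg: "x \<in> gen_subgroup S \<Longrightarrow> - x \<in> gen_subgroup S"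

definition K_algebra :: "('k::field \<Rightarrow> 'h::ring_1 \<Rightarrow> 'h) \<Rightarrow> bool" where
  "K_algebra sc \<longleftrightarrow> vector_space sc \<and>
     (\<forall>a x y. sc a (x * y) = sc a x * y \<and> sc a (x * y) = x * sc a y)"

definition is_basis :: "('k::field \<Rightarrow> 'h::ring_1 \<Rightarrow> 'h) \<Rightarrow> (nat \<Rightarrow> 'h) \<Rightarrow> nat \<Rightarrow> bool" where
  "is_basis sc b n \<longleftrightarrow> inj_on b {..<n} \<and> \<not> module.dependent sc (b ` {..<n}) \<and>
     module.span sc (b ` {..<n}) = UNIV"

definition fin_dim :: "('k::field \<Rightarrow> 'h::ring_1 \<Rightarrow> 'h) \<Rightarrow> bool" where
  "fin_dim sc \<longleftrightarrow> (\<exists>b n. is_basis sc b n)"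

definition is_rep :: "('k::field \<Rightarrow> 'h::ring_1 \<Rightarrow> 'h) \<Rightarrow> nat \<Rightarrow> ('h \<Rightarrow> 'k mat) \<Rightarrow> bool" where
  "is_rep sc d \<rho> \<longleftrightarrow> (\<forall>x. \<rho> x \<in> carrier_mat d d) \<and> \<rho> 1 = 1\<^sub>m d \<and>
     (\<forall>x y. \<rho> (x * y) = \<rho> x * \<rho> y) \<and> (\<forall>x y. \<rho> (x + y) = \<rho> x + \<rho> y) \<and>
     (\<forall>a x. \<rho> (sc a x) = a \<cdot>\<^sub>m \<rho> x)"

definition irreducible_rep :: "('k::field \<Rightarrow> 'h::ring_1 \<Rightarrow> 'h) \<Rightarrow> nat \<Rightarrow> ('h \<Rightarrow> 'k mat) \<Rightarrow> bool" where
  "irreducible_rep sc d \<rho> \<longleftrightarrow> is_rep sc d \<rho> \<and> 0 < d \<and>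
     (\<forall>W. W \<subseteq> carrier_vec d \<longrightarrow> 0\<^sub>v d \<in> W \<longrightarrow>
        (\<forall>u\<in>W. \<forall>w\<in>W. u + w \<in> W) \<longrightarrow> (\<forall>a. \<forall>u\<in>W. a \<cdot>\<^sub>v u \<in> W) \<longrightarrow>
        (\<forall>x. \<forall>u\<in>W. \<rho> x *\<^sub>v u \<in> W) \<longrightarrow> W = {0\<^sub>v d} \<or> W = carrier_vec d)"

definition mtrace :: "'a::comm_ring_1 mat \<Rightarrow> 'a" where
  "mtrace A = (\<Sum>i<dim_row A. A $$ (i, i))"

text \<open>Split semisimple: finite-dimensional and isomorphic, via finitely many
  irreducible representations, to a product of full matrix algebras over K.\<close>

definition split_semisimple :: "('k::field \<Rightarrow> 'h::ring_1 \<Rightarrow> 'h) \<Rightarrow> bool" where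
  "split_semisimple sc \<longleftrightarrow> K_algebra sc \<and> fin_dim sc \<and>
     (\<exists>(r::nat) (ds :: nat \<Rightarrow> nat) (\<rho>s :: nat \<Rightarrow> 'h \<Rightarrow> 'k mat).
        (\<forall>i<r. irreducible_rep sc (ds i) (\<rho>s i)) \<and>
        (\<forall>M. (\<forall>i<r. M i \<in> carrier_mat (ds i) (ds i)) \<longrightarrow> (\<exists>!x. \<forall>i<r. \<rho>s i x = M i)))"

definition sym_trace_form :: "('k::field \<Rightarrow> 'h::ring_1 \<Rightarrow> 'h) \<Rightarrow> ('h \<Rightarrow> 'k) \<Rightarrow> bool" where
  "sym_trace_form sc \<tau> \<longleftrightarrow> (\<forall>x y. \<tau> (x + y) = \<tau> x + \<tau> y) \<and> (\<forall>a x. \<tau> (sc a x) = a * \<tau> x) \<and>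
     (\<forall>x y. \<tau> (x * y) = \<tau> (y * x)) \<and> (\<forall>x. (\<forall>y. \<tau> (x * y) = 0) \<longrightarrow> x = 0)"

definition lin_involutive_antiaut :: "('k::field \<Rightarrow> 'h::ring_1 \<Rightarrow> 'h) \<Rightarrow> ('h \<Rightarrow> 'h) \<Rightarrow> bool" where
  "lin_involutive_antiaut sc st \<longleftrightarrow> (\<forall>x y. st (x + y) = st x + st y) \<and>
     (\<forall>a x. st (sc a x) = sc a (st x)) \<and> (\<forall>x y. st (x * y) = st y * st x) \<and>
     (\<forall>x. st (st x) = x)"

definition star_sym_basis ::
  "('k::field \<Rightarrow> 'h::ring_1 \<Rightarrow> 'h) \<Rightarrow> ('h \<Rightarrow> 'k) \<Rightarrow> ('h \<Rightarrow> 'h) \<Rightarrow> (nat \<Rightarrow> 'h) \<Rightarrow> nat \<Rightarrow> bool" where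
  "star_sym_basis sc \<tau> st b n \<longleftrightarrow> is_basis sc b n \<and> st ` b ` {..<n} = b ` {..<n} \<and>
     (\<forall>i<n. \<forall>j<n. \<tau> (b i * st (b j)) = (if i = j then 1 else 0))"

definition star_idx :: "('h \<Rightarrow> 'h) \<Rightarrow> (nat \<Rightarrow> 'h) \<Rightarrow> nat \<Rightarrow> nat \<Rightarrow> nat" where
  "star_idx st b n i = (THE j. j < n \<and> b j = st (b i))"

definition lead_coeff_mat :: "('k \<Rightarrow> 'f) \<Rightarrow> 'k::field \<Rightarrow> 'k mat \<Rightarrow> 'f mat" where
  "lead_coeff_mat \<pi> va R = map_mat (\<lambda>e. \<pi> (va * e)) R"

text \<open>Parameters: pi reduction, Lam, d dimensions, rho reps, va lambda = v^{a_lambda},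
  f lambda = f_lambda (in K).\<close>

definition asym_gamma ::
  "('k::field \<Rightarrow> 'f::field) \<Rightarrow> 'l set \<Rightarrow> ('l \<Rightarrow> nat) \<Rightarrow> ('l \<Rightarrow> 'h \<Rightarrow> 'k mat) \<Rightarrow> ('l \<Rightarrow> 'k) \<Rightarrow> ('l \<Rightarrow> 'k)
    \<Rightarrow> 'h \<Rightarrow> 'h \<Rightarrow> 'h \<Rightarrow> 'f" where
  "asym_gamma \<pi> \<Lambda> d \<rho> va f x y z =
    (\<Sum>lam\<in>\<Lambda>. \<Sum>s<d lam. \<Sum>t<d lam. \<Sum>u<d lam.
       inverse (\<pi> (f lam)) * lead_coeff_mat \<pi> (va lam) (\<rho> lam x) $$ (s, t)
         * lead_coeff_mat \<pi> (va lam) (\<rho> lam y) $$ (t, u)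
         * lead_coeff_mat \<pi> (va lam) (\<rho> lam z) $$ (u, s))"

definition asym_n ::
  "('k::field \<Rightarrow> 'f::field) \<Rightarrow> 'l set \<Rightarrow> ('l \<Rightarrow> nat) \<Rightarrow> ('l \<Rightarrow> 'h \<Rightarrow> 'k mat) \<Rightarrow> ('l \<Rightarrow> 'k) \<Rightarrow> ('l \<Rightarrow> 'k)
    \<Rightarrow> 'h \<Rightarrow> 'f" where
  "asym_n \<pi> \<Lambda> d \<rho> va f x =
    (\<Sum>lam\<in>\<Lambda>. \<Sum>s<d lam. inverse (\<pi> (f lam)) * lead_coeff_mat \<pi> (va lam) (\<rho> lam x) $$ (s, s))"

text \<open>Elements of J are coordinate vectors (dimension n) w.r.t. the basis (t_i)_{i<n}.
  Product: t_i t_j = sum_k gamma(b_i,b_j,b_k) t_{k*}.\<close>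

definition asym_mult ::
  "('k::field \<Rightarrow> 'f::field) \<Rightarrow> 'l set \<Rightarrow> ('l \<Rightarrow> nat) \<Rightarrow> ('l \<Rightarrow> 'h \<Rightarrow> 'k mat) \<Rightarrow> ('l \<Rightarrow> 'k) \<Rightarrow> ('l \<Rightarrow> 'k)
    \<Rightarrow> ('h \<Rightarrow> 'h) \<Rightarrow> (nat \<Rightarrow> 'h) \<Rightarrow> nat \<Rightarrow> 'f vec \<Rightarrow> 'f vec \<Rightarrow> 'f vec" where
  "asym_mult \<pi> \<Lambda> d \<rho> va f st b n u w =
     vec n (\<lambda>k. \<Sum>i<n. \<Sum>j<n. \<Sum>l<n.
        if star_idx st b n l = k then u $ i * w $ j * asym_gamma \<pi> \<Lambda> d \<rho> va f (b i) (b j) (b l) else 0)"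

definition asym_trace ::
  "('k::field \<Rightarrow> 'f::field) \<Rightarrow> 'l set \<Rightarrow> ('l \<Rightarrow> nat) \<Rightarrow> ('l \<Rightarrow> 'h \<Rightarrow> 'k mat) \<Rightarrow> ('l \<Rightarrow> 'k) \<Rightarrow> ('l \<Rightarrow> 'k)
    \<Rightarrow> ('h \<Rightarrow> 'h) \<Rightarrow> (nat \<Rightarrow> 'h) \<Rightarrow> nat \<Rightarrow> 'f vec \<Rightarrow> 'f" where
  "asym_trace \<pi> \<Lambda> d \<rho> va f st b n u = (\<Sum>i<n. u $ i * asym_n \<pi> \<Lambda> d \<rho> va f (st (b i)))"

definition asym_star :: "('h \<Rightarrow> 'h) \<Rightarrow> (nat \<Rightarrow> 'h) \<Rightarrow> nat \<Rightarrow> 'f::field vec \<Rightarrow> 'f vec" where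
  "asym_star st b n u = vec n (\<lambda>k. \<Sum>i<n. if star_idx st b n i = k then u $ i else 0)"

end

theory Submission
  imports Defs "Jordan_Normal_Form.Determinant"
begin

text \<open>
  Pairing with the trace form identifies the base change matrix, \<open>A\<^sub>i\<^sub>j = \<tau>(b'\<^sub>i b\<^sub>j\<^sup>*)\<close>,
  and since both bases are dual to their \<open>*\<close>-images, \<open>A A\<^sup>T = 1\<close>. Over a formally real
  residue field an orthogonal matrix has entries in \<open>\<O>\<close>: otherwise, rescaling a row by an
  element of the opposite valuation and reducing mod \<open>\<m>\<close> gives a nontrivial vanishing sum of
  squares in \<open>F\<close>. Balancedness makes the leading coefficients \<open>c\<^sup>\<lambda>\<close> \<open>\<O>\<close>-linear in the
  basis element, so \<open>c\<^sup>\<lambda>(b'\<^sub>i) = \<Sum>\<^sub>j (A\<^sub>i\<^sub>j mod \<m>) c\<^sup>\<lambda>(b\<^sub>j)\<close>. Hence the structure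
  constants and the values \<open>n\<^sub>x\<close> of \<open>J'\<close> are those of \<open>J\<close> transported by the orthogonal
  matrix \<open>A mod \<m>\<close>, which also intertwines the \<open>*\<close>-permutations of the two bases.
\<close>

lemma surj_valuation_mult:
  "surj_valuation \<nu> \<Longrightarrow> x \<noteq> 0 \<Longrightarrow> y \<noteq> 0 \<Longrightarrow> \<nu> (x * y) = \<nu> x + \<nu> y"
  unfolding surj_valuation_def by blast

lemma zero_in_val_ring [simp]: "0 \<in> val_ring \<nu>"
  unfolding val_ring_def valge_def by simp

lemma val_ring_add:
  assumes "surj_valuation \<nu>" "x \<in> val_ring \<nu>" "y \<in> val_ring \<nu>"
  shows "x + y \<in> val_ring \<nu>"
proof (cases "x = 0 \<or> y = 0 \<or> x + y = 0")
  case False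
  then have "min (\<nu> x) (\<nu> y) \<le> \<nu> (x + y)"
    using assms(1) unfolding surj_valuation_def by blast
  moreover have "0 \<le> \<nu> x" "0 \<le> \<nu> y"
    using False assms(2,3) unfolding val_ring_def valge_def by auto
  ultimately have "0 \<le> \<nu> (x + y)" by (meson min.boundedI order_trans)
  then show ?thesis unfolding val_ring_def valge_def by simp
qed (use assms in auto)

lemma val_ring_mult:
  assumes "surj_valuation \<nu>" "x \<in> val_ring \<nu>" "y \<in> val_ring \<nu>"
  shows "x * y \<in> val_ring \<nu>"
proof (cases "x = 0 \<or> y = 0")
  case False
  then show ?thesis
    using assms surj_valuation_mult[OF assms(1), of x y]
    unfolding val_ring_def valge_def by (auto intro: add_nonneg_nonneg)
qed auto

lemma val_ring_sum:
  assumes "surj_valuation \<nu>" "\<And>x. x \<in> S \<Longrightarrow> g x \<in> val_ring \<nu>"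
  shows "sum g S \<in> val_ring \<nu>"
  using assms(2) by (induction S rule: infinite_finite_induct) (auto intro: val_ring_add[OF assms(1)])

lemma mult_in_val_ring_if_valge:
  assumes "surj_valuation \<nu>" "x \<noteq> 0" "valge \<nu> y (- \<nu> x)"
  shows "x * y \<in> val_ring \<nu>"
proof (cases "y = 0")
  case False
  then have "\<nu> x + - \<nu> x \<le> \<nu> x + \<nu> y"
    using assms(3) unfolding valge_def by (intro add_left_mono) simp
  then show ?thesis
    using surj_valuation_mult[OF assms(1,2) False] unfolding val_ring_def valge_def by simp
qed simp

lemma residue_add:
  "residue_map \<nu> \<pi> \<Longrightarrow> x \<in> val_ring \<nu> \<Longrightarrow> y \<in> val_ring \<nu> \<Longrightarrow> \<pi> (x + y) = \<pi> x + \<pi> y"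
  unfolding residue_map_def by blast

lemma residue_mult:
  "residue_map \<nu> \<pi> \<Longrightarrow> x \<in> val_ring \<nu> \<Longrightarrow> y \<in> val_ring \<nu> \<Longrightarrow> \<pi> (x * y) = \<pi> x * \<pi> y"
  unfolding residue_map_def by blast

lemma residue_zero: "residue_map \<nu> \<pi> \<Longrightarrow> \<pi> 0 = 0"
  using residue_add[of \<nu> \<pi> 0 0] by (metis add_cancel_right_right zero_in_val_ring)

lemma residue_one: "residue_map \<nu> \<pi> \<Longrightarrow> \<pi> 1 = 1"
  unfolding residue_map_def by blast

lemma residue_eq_zero_iff:
  "residue_map \<nu> \<pi> \<Longrightarrow> x \<in> val_ring \<nu> \<Longrightarrow> \<pi> x = 0 \<longleftrightarrow> x \<in> val_ideal \<nu>"
  unfolding residue_map_def by blast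

lemma residue_sum:
  assumes "surj_valuation \<nu>" "residue_map \<nu> \<pi>" "\<And>x. x \<in> S \<Longrightarrow> g x \<in> val_ring \<nu>"
  shows "\<pi> (sum g S) = (\<Sum>x\<in>S. \<pi> (g x))"
  using assms(3)
proof (induction S rule: infinite_finite_induct)
  case (insert x F)
  then show ?case using residue_add[OF assms(2)] val_ring_sum[OF assms(1), of F g] by simp
qed (simp_all add: residue_zero[OF assms(2)])

lemma formally_real_sum_squares_eq_zero:
  fixes q :: "'a \<Rightarrow> 'f::field"
  assumes "formally_real TYPE('f)" "finite S" "(\<Sum>k\<in>S. q k ^ 2) = 0" "k \<in> S"
  shows "q k = 0"
proof (rule ccontr)
  assume qk: "q k \<noteq> 0"
  obtain js where js: "set js = S - {k}" "distinct js"
    using finite_distinct_list[of "S - {k}"] assms(2) by blast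
  have "(\<Sum>j\<in>S - {k}. q j ^ 2) = - (q k ^ 2)"
    using assms(2-4) sum.remove[OF assms(2,4), of "\<lambda>j. q j ^ 2"] by (simp add: eq_neg_iff_add_eq_0 add.commute)
  then have "(\<Sum>j\<in>S - {k}. (q j / q k) ^ 2) = -1"
    using qk by (simp add: power_divide sum_divide_distrib[symmetric])
  then have "sum_list (map (\<lambda>x. x ^ 2) (map (\<lambda>j. q j / q k) js)) = -1"
    using js sum_list_distinct_conv_sum_set[OF js(2), of "\<lambda>j. (q j / q k) ^ 2"] by (simp add: o_def)
  then show False using assms(1) unfolding formally_real_def by blast
qed

lemma sum_squares_eq_one_imp_in_val_ring:
  fixes \<nu> :: "'k::field \<Rightarrow> 'g::linordered_ab_group_add" and \<pi> :: "'k \<Rightarrow> 'f::field"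
  assumes val: "surj_valuation \<nu>" and res: "residue_map \<nu> \<pi>" and freal: "formally_real TYPE('f)"
    and S: "finite S" and sum_one: "(\<Sum>j\<in>S. x j ^ 2) = 1" and k: "k \<in> S"
  shows "x k \<in> val_ring \<nu>"
proof (rule ccontr)
  assume "x k \<notin> val_ring \<nu>"
  then have xk: "x k \<noteq> 0" "\<nu> (x k) < 0" unfolding val_ring_def valge_def by auto
  define S' where "S' = {j \<in> S. x j \<noteq> 0}"
  have S': "finite S'" "k \<in> S'" using S k xk unfolding S'_def by auto
  define \<mu> where "\<mu> = Min ((\<lambda>j. \<nu> (x j)) ` S')"
  have \<mu>_le: "\<mu> \<le> \<nu> (x j)" if "j \<in> S'" for j unfolding \<mu>_def using S' that by simp
  have "\<mu> \<in> (\<lambda>j. \<nu> (x j)) ` S'" unfolding \<mu>_def using S' by (intro Min_in) auto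
  then obtain j0 where j0: "j0 \<in> S'" "\<nu> (x j0) = \<mu>" by auto
  have \<mu>_neg: "\<mu> < 0" using \<mu>_le[OF S'(2)] xk(2) by simp
  \<comment> \<open>rescaling by \<open>y\<close> turns the coordinates of least valuation into units\<close>
  obtain y where y: "y \<noteq> 0" "\<nu> y = - \<mu>" using val unfolding surj_valuation_def by blast
  have yx: "y * x j \<in> val_ring \<nu>" if "j \<in> S" for j
  proof (cases "x j = 0")
    case False
    then show ?thesis
      using mult_in_val_ring_if_valge[OF val y(1)] \<mu>_le[of j] that y(2) unfolding S'_def valge_def by simp
  qed simp
  have "\<nu> (y * x j0) = 0" "y * x j0 \<noteq> 0"
    using surj_valuation_mult[OF val y(1), of "x j0"] y j0 unfolding S'_def by auto
  then have unit: "\<pi> (y * x j0) \<noteq> 0"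
    using residue_eq_zero_iff[OF res yx] j0(1) unfolding S'_def val_ideal_def by auto
  have "\<nu> (y * y) = - \<mu> + - \<mu>" using surj_valuation_mult[OF val y(1) y(1)] y(2) by simp
  moreover have "0 < - \<mu> + - \<mu>" using \<mu>_neg by (simp add: add_pos_pos)
  ultimately have "y * y \<in> val_ring \<nu>" "y * y \<in> val_ideal \<nu>"
    unfolding val_ring_def val_ideal_def valge_def by auto
  then have "\<pi> (y * y) = 0" using residue_eq_zero_iff[OF res] by blast
  moreover have "(\<Sum>j\<in>S. (y * x j) ^ 2) = y * y"
    using sum_one by (simp add: power_mult_distrib flip: sum_distrib_left) (simp add: power2_eq_square)
  ultimately have "(\<Sum>j\<in>S. \<pi> (y * x j) ^ 2) = 0"
    using residue_sum[OF val res, of S "\<lambda>j. (y * x j) * (y * x j)"] residue_mult[OF res yx yx]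
      val_ring_mult[OF val yx yx] by (simp add: power2_eq_square)
  from formally_real_sum_squares_eq_zero[OF freal S this] j0(1)
  have "\<pi> (y * x j0) = 0" unfolding S'_def by blast
  with unit show False ..
qed

definition involution_on :: "'a set \<Rightarrow> ('a \<Rightarrow> 'a) \<Rightarrow> bool" where
  "involution_on S \<sigma> \<longleftrightarrow> (\<forall>x\<in>S. \<sigma> x \<in> S \<and> \<sigma> (\<sigma> x) = x)"

lemma involution_on_bij_betw: "involution_on S \<sigma> \<Longrightarrow> bij_betw \<sigma> S S"
  unfolding involution_on_def by (intro bij_betwI[where g = \<sigma>]) auto

lemma sum_involution_indicator:
  fixes \<sigma> :: "nat \<Rightarrow> nat"
  assumes "involution_on {..<n} \<sigma>" "k < n"
  shows "(\<Sum>l<n. if \<sigma> l = k then F l else 0) = F (\<sigma> k)"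
proof -
  have "(\<Sum>l<n. if \<sigma> l = k then F l else 0) = (\<Sum>l<n. if l = \<sigma> k then F l else 0)"
    using assms unfolding involution_on_def by (intro sum.cong) auto
  also have "\<dots> = F (\<sigma> k)"
    using assms unfolding involution_on_def by (subst sum.delta) auto
  finally show ?thesis .
qed

lemma
  assumes "star_sym_basis sc \<tau> st b n" "i < n"
  shows star_idx_less: "star_idx st b n i < n"
    and basis_star_idx: "b (star_idx st b n i) = st (b i)"
proof -
  have inj: "inj_on b {..<n}" and im: "st ` b ` {..<n} = b ` {..<n}"
    using assms(1) unfolding star_sym_basis_def is_basis_def by auto
  have "st (b i) \<in> b ` {..<n}" using im assms(2) by blast
  then obtain j where "j < n" "b j = st (b i)" by auto
  then have "\<exists>!j. j < n \<and> b j = st (b i)" using inj unfolding inj_on_def by (metis lessThan_iff)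
  then have "star_idx st b n i < n \<and> b (star_idx st b n i) = st (b i)"
    unfolding star_idx_def by (rule theI')
  then show "star_idx st b n i < n" "b (star_idx st b n i) = st (b i)" by auto
qed

lemma star_idx_star_idx:
  assumes "star_sym_basis sc \<tau> st b n" "lin_involutive_antiaut sc st" "i < n"
  shows "star_idx st b n (star_idx st b n i) = i"
proof -
  have "inj_on b {..<n}" using assms(1) unfolding star_sym_basis_def is_basis_def by auto
  moreover have "b (star_idx st b n (star_idx st b n i)) = b i"
    using assms star_idx_less basis_star_idx unfolding lin_involutive_antiaut_def by metis
  ultimately show ?thesis using assms(1,3) star_idx_less unfolding inj_on_def by blast
qed

lemma involution_on_star_idx:
  assumes "star_sym_basis sc \<tau> st b n" "lin_involutive_antiaut sc st"
  shows "involution_on {..<n} (star_idx st b n)"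
  using star_idx_less[OF assms(1)] star_idx_star_idx[OF assms] unfolding involution_on_def by simp

lemma trace_form_zero: "sym_trace_form sc \<tau> \<Longrightarrow> \<tau> 0 = 0"
  unfolding sym_trace_form_def by (metis add_cancel_right_right add_0)

lemma trace_form_sum_scaled:
  "sym_trace_form sc \<tau> \<Longrightarrow> \<tau> (\<Sum>j\<in>S. sc (g j) (y j)) = (\<Sum>j\<in>S. g j * \<tau> (y j))"
  by (induction S rule: infinite_finite_induct) (auto simp: trace_form_zero, auto simp: sym_trace_form_def)

lemma antiaut_zero: "lin_involutive_antiaut sc st \<Longrightarrow> st 0 = 0"
  unfolding lin_involutive_antiaut_def by (metis add_cancel_right_right add_0)

lemma antiaut_sum_scaled:
  "lin_involutive_antiaut sc st \<Longrightarrow> st (\<Sum>j\<in>S. sc (g j) (y j)) = (\<Sum>j\<in>S. sc (g j) (st (y j)))"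
  by (induction S rule: infinite_finite_induct) (auto simp: antiaut_zero, auto simp: lin_involutive_antiaut_def)

lemma K_algebra_scale_mult:
  assumes "K_algebra sc"
  shows "sc a x * y = sc a (x * y)" and "x * sc a y = sc a (x * y)"
  using assms unfolding K_algebra_def by metis+

locale star_basis_change =
  fixes sc :: "'k::field \<Rightarrow> 'h::ring_1 \<Rightarrow> 'h" and \<tau> :: "'h \<Rightarrow> 'k" and st :: "'h \<Rightarrow> 'h"
    and b b' :: "nat \<Rightarrow> 'h" and n :: nat and A :: "'k mat"
  assumes K_algebra: "K_algebra sc" and trace_form: "sym_trace_form sc \<tau>"
    and star: "lin_involutive_antiaut sc st"
    and B: "star_sym_basis sc \<tau> st b n" and B': "star_sym_basis sc \<tau> st b' n"
    and base_change: "\<forall>i<n. b' i = (\<Sum>j<n. sc (A $$ (i, j)) (b j))"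
begin

lemma trace_basis_pairing:
  "i < n \<Longrightarrow> j < n \<Longrightarrow> \<tau> (b i * st (b j)) = (if i = j then 1 else 0)"
  using B unfolding star_sym_basis_def by blast

lemma star_base_change: "i < n \<Longrightarrow> st (b' i) = (\<Sum>j<n. sc (A $$ (i, j)) (st (b j)))"
  using base_change antiaut_sum_scaled[OF star] by simp

lemma trace_pairing_left:
  assumes "i < n" "m < n" shows "\<tau> (b' i * st (b m)) = A $$ (i, m)"
proof -
  have "b' i * st (b m) = (\<Sum>j<n. sc (A $$ (i, j)) (b j * st (b m)))"
    using base_change assms by (simp add: sum_distrib_right K_algebra_scale_mult[OF K_algebra])
  then show ?thesis using assms by (simp add: trace_form_sum_scaled[OF trace_form] trace_basis_pairing if_distrib cong: if_cong)
qed

lemma trace_pairing_right: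
  assumes "i < n" "m < n" shows "\<tau> (b m * st (b' i)) = A $$ (i, m)"
proof -
  have "b m * st (b' i) = (\<Sum>j<n. sc (A $$ (i, j)) (b m * st (b j)))"
    using star_base_change assms by (simp add: sum_distrib_left K_algebra_scale_mult[OF K_algebra])
  then show ?thesis using assms by (simp add: trace_form_sum_scaled[OF trace_form] trace_basis_pairing if_distrib cong: if_cong)
qed

lemma rows_orthonormal:
  assumes "i < n" "j < n"
  shows "(\<Sum>k<n. A $$ (i, k) * A $$ (j, k)) = (if i = j then 1 else 0)"
proof -
  have "b' i * st (b' j) = (\<Sum>k<n. sc (A $$ (j, k)) (b' i * st (b k)))"
    using star_base_change assms by (simp add: sum_distrib_left K_algebra_scale_mult[OF K_algebra])
  then have "\<tau> (b' i * st (b' j)) = (\<Sum>k<n. A $$ (i, k) * A $$ (j, k))"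
    using assms by (simp add: trace_form_sum_scaled[OF trace_form] trace_pairing_left mult.commute)
  then show ?thesis using B' assms unfolding star_sym_basis_def by simp
qed

lemma entry_star_idx:
  assumes "l < n" "m < n"
  shows "A $$ (star_idx st b' n l, star_idx st b n m) = A $$ (l, m)"
proof -
  have "A $$ (star_idx st b' n l, star_idx st b n m) = \<tau> (st (b' l) * b m)"
    using trace_pairing_left[of "star_idx st b' n l" "star_idx st b n m"] star assms
      star_idx_less[OF B] star_idx_less[OF B'] basis_star_idx[OF B] basis_star_idx[OF B']
    unfolding lin_involutive_antiaut_def by simp
  also have "\<dots> = A $$ (l, m)"
    using trace_form trace_pairing_right assms unfolding sym_trace_form_def by metis
  finally show ?thesis .
qed

lemma mat_mult_transpose_eq_one: "A \<in> carrier_mat n n \<Longrightarrow> A * A\<^sup>T = 1\<^sub>m n"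
  by (intro eq_matI) (auto simp: scalar_prod_def atLeast0LessThan rows_orthonormal)

lemma entries_in_val_ring:
  fixes \<nu> :: "'k \<Rightarrow> 'g::linordered_ab_group_add" and \<pi> :: "'k \<Rightarrow> 'f::field"
  assumes "surj_valuation \<nu>" "residue_map \<nu> \<pi>" "formally_real TYPE('f)" "i < n" "j < n"
  shows "A $$ (i, j) \<in> val_ring \<nu>"
  using sum_squares_eq_one_imp_in_val_ring[OF assms(1-3) finite_lessThan, where x = "\<lambda>k. A $$ (i, k)"]
    rows_orthonormal[of i i] assms(4,5) by (simp add: power2_eq_square)

lemma map_mat_star_idx_compat:
  assumes "A \<in> carrier_mat n n" "k < n" "c < n"
  shows "map_mat g A $$ (k, star_idx st b n c) = map_mat g A $$ (star_idx st b' n k, c)"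
  using entry_star_idx[of "star_idx st b' n k" c] star_idx_star_idx[OF B' star] assms
    star_idx_less[OF B] star_idx_less[OF B'] by simp

end

lemma mult_mat_vec_index:
  "P \<in> carrier_mat n n \<Longrightarrow> u \<in> carrier_vec n \<Longrightarrow> k < n \<Longrightarrow> (P *\<^sub>v u) $ k = (\<Sum>i<n. P $$ (k, i) * u $ i)"
  by (simp add: scalar_prod_def atLeast0LessThan)

lemma mult_mat_vec_reindex_involution:
  assumes P: "P \<in> carrier_mat n n" and \<sigma>: "involution_on {..<n} \<sigma>"
    and compat: "\<And>k c. k < n \<Longrightarrow> c < n \<Longrightarrow> P $$ (k, \<sigma> c) = P $$ (\<sigma>' k, c)" and k: "k < n"
  shows "(P *\<^sub>v vec n (\<lambda>p. \<Phi> (\<sigma> p))) $ k = (\<Sum>c<n. P $$ (\<sigma>' k, c) * \<Phi> c)"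
proof -
  have "(P *\<^sub>v vec n (\<lambda>p. \<Phi> (\<sigma> p))) $ k = (\<Sum>p<n. P $$ (k, \<sigma> (\<sigma> p)) * \<Phi> (\<sigma> p))"
    using mult_mat_vec_index[OF P _ k] \<sigma> unfolding involution_on_def by simp
  also have "\<dots> = (\<Sum>c<n. P $$ (k, \<sigma> c) * \<Phi> c)"
    using sum.reindex_bij_betw[OF involution_on_bij_betw[OF \<sigma>], of "\<lambda>c. P $$ (k, \<sigma> c) * \<Phi> c"] .
  finally show ?thesis using compat k by simp
qed

lemma orthogonal_coordinates:
  fixes P :: "'a::comm_ring_1 mat"
  assumes P: "P \<in> carrier_mat n n" and orth: "P\<^sup>T * P = 1\<^sub>m n" and u: "u \<in> carrier_vec n" and p: "p < n"
  shows "(\<Sum>i<n. (P *\<^sub>v u) $ i * P $$ (i, p)) = u $ p"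
proof -
  have "P\<^sup>T *\<^sub>v (P *\<^sub>v u) = (P\<^sup>T * P) *\<^sub>v u"
    using assoc_mult_mat_vec[of "P\<^sup>T" n n P n u] P u by simp
  also have "\<dots> = u" using orth u by simp
  finally have "P\<^sup>T *\<^sub>v (P *\<^sub>v u) = u" .
  then show ?thesis
    using mult_mat_vec_index[of "P\<^sup>T" n "P *\<^sub>v u" p] P u p by (simp add: mult.commute)
qed

lemma orthogonal_pairing_transport:
  fixes P :: "'a::comm_ring_1 mat"
  assumes P: "P \<in> carrier_mat n n" and orth: "P\<^sup>T * P = 1\<^sub>m n" and u: "u \<in> carrier_vec n"
  shows "(\<Sum>i<n. (P *\<^sub>v u) $ i * (\<Sum>m<n. P $$ (i, m) * g m)) = (\<Sum>m<n. u $ m * g m)"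
proof -
  have "(\<Sum>i<n. (P *\<^sub>v u) $ i * (\<Sum>m<n. P $$ (i, m) * g m))
      = (\<Sum>i<n. \<Sum>m<n. (P *\<^sub>v u) $ i * P $$ (i, m) * g m)"
    by (simp add: sum_distrib_left mult.assoc)
  also have "\<dots> = (\<Sum>m<n. (\<Sum>i<n. (P *\<^sub>v u) $ i * P $$ (i, m)) * g m)"
    by (subst sum.swap) (simp add: sum_distrib_right)
  finally show ?thesis using orthogonal_coordinates[OF P orth u] by simp
qed

lemma sum_swap_factor:
  fixes f g :: "'b \<Rightarrow> 'a::comm_semiring_0"
  shows "(\<Sum>i\<in>I. f i * (\<Sum>j\<in>J. g j * X i j)) = (\<Sum>j\<in>J. g j * (\<Sum>i\<in>I. f i * X i j))"
  unfolding sum_distrib_left by (subst sum.swap) (simp add: mult.left_commute)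

lemma orthogonal_bilinear_transport:
  fixes P :: "'a::comm_ring_1 mat"
  assumes P: "P \<in> carrier_mat n n" and orth: "P\<^sup>T * P = 1\<^sub>m n"
    and u: "u \<in> carrier_vec n" and w: "w \<in> carrier_vec n"
  shows "(\<Sum>i<n. \<Sum>j<n. (P *\<^sub>v u) $ i * (P *\<^sub>v w) $ j * (\<Sum>p<n. P $$ (i, p) * (\<Sum>q<n. P $$ (j, q) * T p q)))
       = (\<Sum>p<n. \<Sum>q<n. u $ p * w $ q * T p q)"
proof -
  have "(\<Sum>i<n. \<Sum>j<n. (P *\<^sub>v u) $ i * (P *\<^sub>v w) $ j * (\<Sum>p<n. P $$ (i, p) * (\<Sum>q<n. P $$ (j, q) * T p q)))
      = (\<Sum>i<n. (P *\<^sub>v u) $ i * (\<Sum>j<n. (P *\<^sub>v w) $ j * (\<Sum>p<n. P $$ (i, p) * (\<Sum>q<n. P $$ (j, q) * T p q))))"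
    by (simp add: sum_distrib_left mult.assoc)
  also have "\<dots> = (\<Sum>j<n. (P *\<^sub>v w) $ j * (\<Sum>i<n. (P *\<^sub>v u) $ i * (\<Sum>p<n. P $$ (i, p) * (\<Sum>q<n. P $$ (j, q) * T p q))))"
    by (rule sum_swap_factor)
  also have "\<dots> = (\<Sum>j<n. (P *\<^sub>v w) $ j * (\<Sum>p<n. u $ p * (\<Sum>q<n. P $$ (j, q) * T p q)))"
    using orthogonal_pairing_transport[OF P orth u] by simp
  also have "\<dots> = (\<Sum>p<n. u $ p * (\<Sum>j<n. (P *\<^sub>v w) $ j * (\<Sum>q<n. P $$ (j, q) * T p q)))"
    by (rule sum_swap_factor)
  also have "\<dots> = (\<Sum>p<n. \<Sum>q<n. u $ p * w $ q * T p q)"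
    using orthogonal_pairing_transport[OF P orth w] by (simp add: sum_distrib_left mult_ac)
  finally show ?thesis .
qed

lemma orthogonal_structure_constants_transport:
  fixes P :: "'a::comm_ring_1 mat" and \<sigma> \<sigma>' :: "nat \<Rightarrow> nat"
  assumes P: "P \<in> carrier_mat n n" and orth: "P\<^sup>T * P = 1\<^sub>m n"
    and \<sigma>: "involution_on {..<n} \<sigma>" and \<sigma>': "involution_on {..<n} \<sigma>'"
    and compat: "\<And>k c. k < n \<Longrightarrow> c < n \<Longrightarrow> P $$ (k, \<sigma> c) = P $$ (\<sigma>' k, c)"
    and \<gamma>': "\<And>i j l. i < n \<Longrightarrow> j < n \<Longrightarrow> l < n \<Longrightarrow>
      \<gamma>' i j l = (\<Sum>p<n. P $$ (i, p) * (\<Sum>q<n. P $$ (j, q) * (\<Sum>r<n. P $$ (l, r) * \<gamma> p q r)))"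
    and u: "u \<in> carrier_vec n" and w: "w \<in> carrier_vec n"
  shows "P *\<^sub>v vec n (\<lambda>k. \<Sum>i<n. \<Sum>j<n. u $ i * w $ j * \<gamma> i j (\<sigma> k))
       = vec n (\<lambda>k. \<Sum>i<n. \<Sum>j<n. (P *\<^sub>v u) $ i * (P *\<^sub>v w) $ j * \<gamma>' i j (\<sigma>' k))"
proof (rule eq_vecI)
  fix k assume "k < dim_vec (vec n (\<lambda>k. \<Sum>i<n. \<Sum>j<n. (P *\<^sub>v u) $ i * (P *\<^sub>v w) $ j * \<gamma>' i j (\<sigma>' k)))"
  then have k: "k < n" by simp
  have \<sigma>'k: "\<sigma>' k < n" using \<sigma>' k unfolding involution_on_def by simp
  have "(P *\<^sub>v vec n (\<lambda>k. \<Sum>i<n. \<Sum>j<n. u $ i * w $ j * \<gamma> i j (\<sigma> k))) $ k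
      = (\<Sum>c<n. P $$ (\<sigma>' k, c) * (\<Sum>i<n. u $ i * (\<Sum>j<n. w $ j * \<gamma> i j c)))"
    using mult_mat_vec_reindex_involution[OF P \<sigma> compat k,
        of "\<lambda>c. \<Sum>i<n. \<Sum>j<n. u $ i * w $ j * \<gamma> i j c"]
    by (simp add: sum_distrib_left mult.assoc)
  also have "\<dots> = (\<Sum>i<n. u $ i * (\<Sum>c<n. P $$ (\<sigma>' k, c) * (\<Sum>j<n. w $ j * \<gamma> i j c)))"
    by (rule sum_swap_factor)
  also have "\<dots> = (\<Sum>i<n. u $ i * (\<Sum>j<n. w $ j * (\<Sum>c<n. P $$ (\<sigma>' k, c) * \<gamma> i j c)))"
    by (simp only: sum_swap_factor[where f = "\<lambda>c. P $$ (\<sigma>' k, c)" and g = "\<lambda>j. w $ j"])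
  also have "\<dots> = (\<Sum>i<n. \<Sum>j<n. u $ i * w $ j * (\<Sum>c<n. P $$ (\<sigma>' k, c) * \<gamma> i j c))"
    by (simp add: sum_distrib_left mult.assoc)
  also have "\<dots> = (\<Sum>i<n. \<Sum>j<n. (P *\<^sub>v u) $ i * (P *\<^sub>v w) $ j *
      (\<Sum>p<n. P $$ (i, p) * (\<Sum>q<n. P $$ (j, q) * (\<Sum>c<n. P $$ (\<sigma>' k, c) * \<gamma> p q c))))"
    by (rule orthogonal_bilinear_transport[OF P orth u w, symmetric])
  also have "\<dots> = (\<Sum>i<n. \<Sum>j<n. (P *\<^sub>v u) $ i * (P *\<^sub>v w) $ j * \<gamma>' i j (\<sigma>' k))"
    using \<gamma>' \<sigma>'k by simp
  finally show "(P *\<^sub>v vec n (\<lambda>k. \<Sum>i<n. \<Sum>j<n. u $ i * w $ j * \<gamma> i j (\<sigma> k))) $ k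
      = vec n (\<lambda>k. \<Sum>i<n. \<Sum>j<n. (P *\<^sub>v u) $ i * (P *\<^sub>v w) $ j * \<gamma>' i j (\<sigma>' k)) $ k"
    using k by simp
qed (use P in simp)

lemma involution_compatible_transport:
  fixes P :: "'a::comm_ring_1 mat" and \<sigma> \<sigma>' :: "nat \<Rightarrow> nat"
  assumes P: "P \<in> carrier_mat n n" and \<sigma>: "involution_on {..<n} \<sigma>" and \<sigma>': "involution_on {..<n} \<sigma>'"
    and compat: "\<And>k c. k < n \<Longrightarrow> c < n \<Longrightarrow> P $$ (k, \<sigma> c) = P $$ (\<sigma>' k, c)"
    and u: "u \<in> carrier_vec n"
  shows "P *\<^sub>v vec n (\<lambda>k. u $ \<sigma> k) = vec n (\<lambda>k. (P *\<^sub>v u) $ \<sigma>' k)"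
proof (rule eq_vecI)
  fix k assume "k < dim_vec (vec n (\<lambda>k. (P *\<^sub>v u) $ \<sigma>' k))"
  then have k: "k < n" by simp
  then have "\<sigma>' k < n" using \<sigma>' unfolding involution_on_def by simp
  then show "(P *\<^sub>v vec n (\<lambda>k. u $ \<sigma> k)) $ k = vec n (\<lambda>k. (P *\<^sub>v u) $ \<sigma>' k) $ k"
    using mult_mat_vec_reindex_involution[OF P \<sigma> compat k, of "\<lambda>c. u $ c"]
      mult_mat_vec_index[OF P u] k by simp
qed (use P in simp)

lemma orthogonal_mult_mat_vec_bij:
  fixes P :: "'a::comm_ring_1 mat"
  assumes P: "P \<in> carrier_mat n n" and "P * P\<^sup>T = 1\<^sub>m n" "P\<^sup>T * P = 1\<^sub>m n"
  shows "bij_betw (\<lambda>u. P *\<^sub>v u) (carrier_vec n) (carrier_vec n)"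
proof (rule bij_betwI[where g = "\<lambda>u. P\<^sup>T *\<^sub>v u"])
  have "Q *\<^sub>v (R *\<^sub>v u) = u" if "Q * R = 1\<^sub>m n" "Q \<in> carrier_mat n n" "R \<in> carrier_mat n n"
    "u \<in> carrier_vec n" for Q R and u :: "'a vec"
    using that assoc_mult_mat_vec[of Q n n R n u] by simp
  then show "P\<^sup>T *\<^sub>v (P *\<^sub>v u) = u" "P *\<^sub>v (P\<^sup>T *\<^sub>v u) = u" if "u \<in> carrier_vec n" for u
    using assms that by auto
qed (use P in auto)

lemma residue_mat_orthogonal:
  fixes \<nu> :: "'k::field \<Rightarrow> 'g::linordered_ab_group_add" and \<pi> :: "'k \<Rightarrow> 'f::field"
  assumes val: "surj_valuation \<nu>" and res: "residue_map \<nu> \<pi>" and A: "A \<in> carrier_mat n n"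
    and AO: "\<forall>i<n. \<forall>j<n. A $$ (i, j) \<in> val_ring \<nu>" and orth: "A * A\<^sup>T = 1\<^sub>m n"
  shows "map_mat \<pi> A * (map_mat \<pi> A)\<^sup>T = 1\<^sub>m n"
proof (rule eq_matI)
  fix i j assume "i < dim_row (1\<^sub>m n)" "j < dim_col (1\<^sub>m n)"
  then have ij: "i < n" "j < n" by auto
  have "(map_mat \<pi> A * (map_mat \<pi> A)\<^sup>T) $$ (i, j) = (\<Sum>k<n. \<pi> (A $$ (i, k)) * \<pi> (A $$ (j, k)))"
    using A ij by (simp add: scalar_prod_def atLeast0LessThan)
  also have "\<dots> = \<pi> (\<Sum>k<n. A $$ (i, k) * A $$ (j, k))"
    using residue_sum[OF val res, of "{..<n}" "\<lambda>k. A $$ (i, k) * A $$ (j, k)"]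
      residue_mult[OF res] val_ring_mult[OF val] AO ij by simp
  also have "\<dots> = \<pi> ((A * A\<^sup>T) $$ (i, j))"
    using A ij by (simp add: scalar_prod_def atLeast0LessThan)
  finally show "(map_mat \<pi> A * (map_mat \<pi> A)\<^sup>T) $$ (i, j) = 1\<^sub>m n $$ (i, j)"
    using orth ij residue_zero[OF res] residue_one[OF res] by simp
qed (use A in auto)

definition weighted_trace_triple ::
  "'l set \<Rightarrow> ('l \<Rightarrow> nat) \<Rightarrow> ('l \<Rightarrow> 'f::comm_ring_1) \<Rightarrow> ('l \<Rightarrow> nat \<Rightarrow> nat \<Rightarrow> 'f)
    \<Rightarrow> ('l \<Rightarrow> nat \<Rightarrow> nat \<Rightarrow> 'f) \<Rightarrow> ('l \<Rightarrow> nat \<Rightarrow> nat \<Rightarrow> 'f) \<Rightarrow> 'f" where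
  "weighted_trace_triple L D C X Y Z =
    (\<Sum>lam\<in>L. \<Sum>s<D lam. \<Sum>t<D lam. \<Sum>u<D lam. C lam * X lam s t * Y lam t u * Z lam u s)"

definition weighted_trace ::
  "'l set \<Rightarrow> ('l \<Rightarrow> nat) \<Rightarrow> ('l \<Rightarrow> 'f::comm_ring_1) \<Rightarrow> ('l \<Rightarrow> nat \<Rightarrow> nat \<Rightarrow> 'f) \<Rightarrow> 'f" where
  "weighted_trace L D C X = (\<Sum>lam\<in>L. \<Sum>s<D lam. C lam * X lam s s)"

lemma weighted_trace_triple_linear:
  "weighted_trace_triple L D C (\<lambda>lam s t. \<Sum>p\<in>I. a p * F p lam s t) Y Z
     = (\<Sum>p\<in>I. a p * weighted_trace_triple L D C (F p) Y Z)"
  "weighted_trace_triple L D C X (\<lambda>lam s t. \<Sum>p\<in>I. a p * F p lam s t) Z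
     = (\<Sum>p\<in>I. a p * weighted_trace_triple L D C X (F p) Z)"
  "weighted_trace_triple L D C X Y (\<lambda>lam s t. \<Sum>p\<in>I. a p * F p lam s t)
     = (\<Sum>p\<in>I. a p * weighted_trace_triple L D C X Y (F p))"
  unfolding weighted_trace_triple_def
  by (simp_all add: sum_distrib_left sum_distrib_right mult_ac sum.swap[of _ I])

lemma weighted_trace_linear:
  "weighted_trace L D C (\<lambda>lam s t. \<Sum>p\<in>I. a p * X p lam s t) = (\<Sum>p\<in>I. a p * weighted_trace L D C (X p))"
  unfolding weighted_trace_def by (simp add: sum_distrib_left sum_distrib_right mult_ac sum.swap[of _ I])

lemma weighted_trace_triple_cong:
  assumes "\<And>lam s t. lam \<in> L \<Longrightarrow> s < D lam \<Longrightarrow> t < D lam \<Longrightarrow> X lam s t = X' lam s t"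
    "\<And>lam s t. lam \<in> L \<Longrightarrow> s < D lam \<Longrightarrow> t < D lam \<Longrightarrow> Y lam s t = Y' lam s t"
    "\<And>lam s t. lam \<in> L \<Longrightarrow> s < D lam \<Longrightarrow> t < D lam \<Longrightarrow> Z lam s t = Z' lam s t"
  shows "weighted_trace_triple L D C X Y Z = weighted_trace_triple L D C X' Y' Z'"
  unfolding weighted_trace_triple_def using assms by (intro sum.cong refl) auto

lemma weighted_trace_cong:
  assumes "\<And>lam s. lam \<in> L \<Longrightarrow> s < D lam \<Longrightarrow> X lam s s = X' lam s s"
  shows "weighted_trace L D C X = weighted_trace L D C X'"
  unfolding weighted_trace_def using assms by (intro sum.cong refl) auto

text \<open>Since \<open>\<pi>\<close> is additive only on \<open>\<O>\<close>,
  they are linear only in integral combinations (\<open>lead_coeffs_combination\<close>).\<close>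

definition lead_coeffs :: "('k \<Rightarrow> 'f) \<Rightarrow> ('l \<Rightarrow> 'k::field) \<Rightarrow> ('l \<Rightarrow> 'h \<Rightarrow> 'k mat) \<Rightarrow> 'h \<Rightarrow> 'l \<Rightarrow> nat \<Rightarrow> nat \<Rightarrow> 'f" where
  "lead_coeffs \<pi> va \<rho> x lam s t = \<pi> (va lam * \<rho> lam x $$ (s, t))"

lemma is_rep_carrier: "is_rep sc D R \<Longrightarrow> R x \<in> carrier_mat D D"
  unfolding is_rep_def by blast

lemma rep_entry_add: "is_rep sc D R \<Longrightarrow> s < D \<Longrightarrow> t < D \<Longrightarrow> R (x + y) $$ (s, t) = R x $$ (s, t) + R y $$ (s, t)"
  unfolding is_rep_def by (metis carrier_matD index_add_mat(1))

lemma rep_entry_scale: "is_rep sc D R \<Longrightarrow> s < D \<Longrightarrow> t < D \<Longrightarrow> R (sc a x) $$ (s, t) = a * R x $$ (s, t)"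
  unfolding is_rep_def by (metis carrier_matD index_smult_mat(1))

lemma rep_entry_zero: "is_rep sc D R \<Longrightarrow> s < D \<Longrightarrow> t < D \<Longrightarrow> R 0 $$ (s, t) = 0"
  using rep_entry_add[of sc D R s t 0 0] by (simp, metis add_cancel_right_right)

lemma rep_entry_sum_scaled:
  assumes "is_rep sc D R" "s < D" "t < D"
  shows "R (\<Sum>j\<in>S. sc (a j) (y j)) $$ (s, t) = (\<Sum>j\<in>S. a j * R (y j) $$ (s, t))"
  by (induction S rule: infinite_finite_induct)
     (simp_all add: rep_entry_zero[OF assms] rep_entry_add[OF assms] rep_entry_scale[OF assms])

lemma asym_gamma_eq_weighted_trace_triple:
  assumes "\<forall>lam\<in>\<Lambda>. is_rep sc (d lam) (\<rho> lam)"
  shows "asym_gamma \<pi> \<Lambda> d \<rho> va f x y z = weighted_trace_triple \<Lambda> d (\<lambda>lam. inverse (\<pi> (f lam)))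
           (lead_coeffs \<pi> va \<rho> x) (lead_coeffs \<pi> va \<rho> y) (lead_coeffs \<pi> va \<rho> z)"
proof -
  have "dim_row (\<rho> lam x) = d lam" "dim_col (\<rho> lam x) = d lam" if "lam \<in> \<Lambda>" for lam x
    using is_rep_carrier assms that by (metis carrier_matD)+
  then show ?thesis unfolding asym_gamma_def weighted_trace_triple_def
    by (intro sum.cong refl) (simp add: lead_coeff_mat_def lead_coeffs_def mult.assoc)
qed

lemma asym_n_eq_weighted_trace:
  assumes "\<forall>lam\<in>\<Lambda>. is_rep sc (d lam) (\<rho> lam)"
  shows "asym_n \<pi> \<Lambda> d \<rho> va f x = weighted_trace \<Lambda> d (\<lambda>lam. inverse (\<pi> (f lam))) (lead_coeffs \<pi> va \<rho> x)"
proof -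
  have "dim_row (\<rho> lam x) = d lam" "dim_col (\<rho> lam x) = d lam" if "lam \<in> \<Lambda>" for lam
    using is_rep_carrier assms that by (metis carrier_matD)+
  then show ?thesis unfolding asym_n_def weighted_trace_def
    by (intro sum.cong refl) (simp add: lead_coeff_mat_def lead_coeffs_def)
qed

lemma lead_coeffs_combination:
  assumes val: "surj_valuation \<nu>" and res: "residue_map \<nu> \<pi>" and rep: "is_rep sc (d lam) (\<rho> lam)"
    and st: "s < d lam" "t < d lam"
    and aO: "\<forall>j<n. a j \<in> val_ring \<nu>" and yO: "\<forall>j<n. va lam * \<rho> lam (y j) $$ (s, t) \<in> val_ring \<nu>"
  shows "lead_coeffs \<pi> va \<rho> (\<Sum>j<n. sc (a j) (y j)) lam s t
       = (\<Sum>j<n. \<pi> (a j) * lead_coeffs \<pi> va \<rho> (y j) lam s t)"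
proof -
  have "lead_coeffs \<pi> va \<rho> (\<Sum>j<n. sc (a j) (y j)) lam s t = \<pi> (\<Sum>j<n. a j * (va lam * \<rho> lam (y j) $$ (s, t)))"
    unfolding lead_coeffs_def rep_entry_sum_scaled[OF rep st] by (simp add: sum_distrib_left mult_ac)
  then show ?thesis
    using residue_sum[OF val res, of "{..<n}" "\<lambda>j. a j * (va lam * \<rho> lam (y j) $$ (s, t))"]
      residue_mult[OF res] val_ring_mult[OF val] aO yO
    by (simp add: lead_coeffs_def)
qed

lemma asym_gamma_combination:
  assumes val: "surj_valuation \<nu>" and res: "residue_map \<nu> \<pi>"
    and reps: "\<forall>lam\<in>\<Lambda>. is_rep sc (d lam) (\<rho> lam)"
    and aO: "\<forall>j<n. a1 j \<in> val_ring \<nu> \<and> a2 j \<in> val_ring \<nu> \<and> a3 j \<in> val_ring \<nu>"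
    and yO: "\<forall>lam\<in>\<Lambda>. \<forall>j<n. \<forall>s<d lam. \<forall>t<d lam. va lam * \<rho> lam (y j) $$ (s, t) \<in> val_ring \<nu>"
  shows "asym_gamma \<pi> \<Lambda> d \<rho> va f (\<Sum>p<n. sc (a1 p) (y p)) (\<Sum>q<n. sc (a2 q) (y q)) (\<Sum>r<n. sc (a3 r) (y r))
       = (\<Sum>p<n. \<pi> (a1 p) * (\<Sum>q<n. \<pi> (a2 q) * (\<Sum>r<n. \<pi> (a3 r) *
            asym_gamma \<pi> \<Lambda> d \<rho> va f (y p) (y q) (y r))))"
proof -
  have combination: "lead_coeffs \<pi> va \<rho> (\<Sum>j<n. sc (a j) (y j)) lam s t
      = (\<Sum>j<n. \<pi> (a j) * lead_coeffs \<pi> va \<rho> (y j) lam s t)"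
    if "lam \<in> \<Lambda>" "s < d lam" "t < d lam" "\<forall>j<n. a j \<in> val_ring \<nu>" for a lam s t
    by (rule lead_coeffs_combination[OF val res]) (use reps yO that in auto)
  show ?thesis
    unfolding asym_gamma_eq_weighted_trace_triple[OF reps]
    by (subst weighted_trace_triple_cong[OF combination combination combination])
       (use aO in \<open>simp_all add: weighted_trace_triple_linear\<close>)
qed

lemma asym_n_combination:
  assumes val: "surj_valuation \<nu>" and res: "residue_map \<nu> \<pi>"
    and reps: "\<forall>lam\<in>\<Lambda>. is_rep sc (d lam) (\<rho> lam)" and aO: "\<forall>j<n. a j \<in> val_ring \<nu>"
    and yO: "\<forall>lam\<in>\<Lambda>. \<forall>j<n. \<forall>s<d lam. \<forall>t<d lam. va lam * \<rho> lam (y j) $$ (s, t) \<in> val_ring \<nu>"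
  shows "asym_n \<pi> \<Lambda> d \<rho> va f (\<Sum>j<n. sc (a j) (y j)) = (\<Sum>j<n. \<pi> (a j) * asym_n \<pi> \<Lambda> d \<rho> va f (y j))"
proof -
  have combination: "lead_coeffs \<pi> va \<rho> (\<Sum>j<n. sc (a j) (y j)) lam s s
      = (\<Sum>j<n. \<pi> (a j) * lead_coeffs \<pi> va \<rho> (y j) lam s s)" if "lam \<in> \<Lambda>" "s < d lam" for lam s
    by (rule lead_coeffs_combination[OF val res]) (use reps aO yO that in auto)
  have "weighted_trace \<Lambda> d (\<lambda>lam. inverse (\<pi> (f lam))) (lead_coeffs \<pi> va \<rho> (\<Sum>j<n. sc (a j) (y j)))
      = weighted_trace \<Lambda> d (\<lambda>lam. inverse (\<pi> (f lam)))
          (\<lambda>lam s t. \<Sum>j<n. \<pi> (a j) * lead_coeffs \<pi> va \<rho> (y j) lam s t)"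
    by (rule weighted_trace_cong) (rule combination)
  then show ?thesis unfolding asym_n_eq_weighted_trace[OF reps] by (simp add: weighted_trace_linear)
qed

lemma asym_mult_eq_structure_constants:
  assumes "involution_on {..<n} (star_idx st b n)"
  shows "asym_mult \<pi> \<Lambda> d \<rho> va f st b n u w = vec n (\<lambda>k. \<Sum>i<n. \<Sum>j<n.
           u $ i * w $ j * asym_gamma \<pi> \<Lambda> d \<rho> va f (b i) (b j) (b (star_idx st b n k)))"
  unfolding asym_mult_def
  by (intro eq_vecI) (simp_all add: sum_involution_indicator[OF assms])

lemma asym_star_eq_reindex:
  assumes "involution_on {..<n} (star_idx st b n)"
  shows "asym_star st b n u = vec n (\<lambda>k. u $ star_idx st b n k)"
  unfolding asym_star_def
  by (intro eq_vecI) (simp_all add: sum_involution_indicator[OF assms])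

theorem lemma2p2p6:
  fixes \<nu> :: "'k::field \<Rightarrow> 'g::linordered_ab_group_add"
    and \<pi> :: "'k \<Rightarrow> 'f::field"
    and sc :: "'k \<Rightarrow> 'h::ring_1 \<Rightarrow> 'h"
    and \<tau> :: "'h \<Rightarrow> 'k"
    and st :: "'h \<Rightarrow> 'h"
    and \<Lambda> :: "'l set"
    and d :: "'l \<Rightarrow> nat"
    and \<rho> :: "'l \<Rightarrow> 'h \<Rightarrow> 'k mat"
    and c :: "'l \<Rightarrow> 'k"
    and a :: "'l \<Rightarrow> 'g"
    and v :: "'g \<Rightarrow> 'k"
    and b b' :: "nat \<Rightarrow> 'h"
    and n :: nat
    and A :: "'k mat"
  assumes val: "surj_valuation \<nu>"
    and res: "residue_map \<nu> \<pi>"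
    and freal: "formally_real TYPE('f)"
    and ssimple: "split_semisimple sc"
    and trace_form: "sym_trace_form sc \<tau>"
    and star: "lin_involutive_antiaut sc st"
    and finLam: "finite \<Lambda>"
    and irr: "\<forall>lam\<in>\<Lambda>. irreducible_rep sc (d lam) (\<rho> lam)"
    and distinct_chars: "\<forall>lam\<in>\<Lambda>. \<forall>mu\<in>\<Lambda>. lam \<noteq> mu \<longrightarrow>
               (\<lambda>x. mtrace (\<rho> lam x)) \<noteq> (\<lambda>x. mtrace (\<rho> mu x))"
    and all_chars: "\<forall>d' \<rho>'. irreducible_rep sc d' \<rho>' \<longrightarrow>
               (\<exists>lam\<in>\<Lambda>. \<forall>x. mtrace (\<rho>' x) = mtrace (\<rho> lam x))"
    and c_nz: "\<forall>lam\<in>\<Lambda>. c lam \<noteq> 0"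
    and schur: "\<forall>x. \<tau> x = (\<Sum>lam\<in>\<Lambda>. inverse (c lam) * mtrace (\<rho> lam x))"
    and a_def: "\<forall>lam\<in>\<Lambda>. a lam + a lam = - \<nu> (c lam)"
    and v_val: "\<forall>g\<in>gen_subgroup (a ` \<Lambda>). v g \<noteq> 0 \<and> \<nu> (v g) = g"
    and v_hom: "\<forall>g\<in>gen_subgroup (a ` \<Lambda>). \<forall>h\<in>gen_subgroup (a ` \<Lambda>). v (g + h) = v g * v h"
    and balanced: "\<forall>lam\<in>\<Lambda>. \<forall>(b0 :: nat \<Rightarrow> 'h) m. star_sym_basis sc \<tau> st b0 m \<longrightarrow>
               (\<forall>i<m. \<forall>s<d lam. \<forall>t<d lam. valge \<nu> (\<rho> lam (b0 i) $$ (s, t)) (- a lam))"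
    and B: "star_sym_basis sc \<tau> st b n"
    and B': "star_sym_basis sc \<tau> st b' n"
    and A: "A \<in> carrier_mat n n"
    and base_change: "\<forall>i<n. b' i = (\<Sum>j<n. sc (A $$ (i, j)) (b j))"
  defines "va \<equiv> \<lambda>lam. v (a lam)"
    and "f \<equiv> \<lambda>lam. v (a lam + a lam) * c lam"
    and "\<alpha> \<equiv> \<lambda>u. map_mat \<pi> A *\<^sub>v u"
  shows "(\<forall>i<n. \<forall>j<n. A $$ (i, j) \<in> val_ring \<nu>) \<and> A * A\<^sup>T = 1\<^sub>m n
    \<and> bij_betw \<alpha> (carrier_vec n) (carrier_vec n)
    \<and> (\<forall>u\<in>carrier_vec n. \<forall>w\<in>carrier_vec n.
          \<alpha> (asym_mult \<pi> \<Lambda> d \<rho> va f st b n u w) = asym_mult \<pi> \<Lambda> d \<rho> va f st b' n (\<alpha> u) (\<alpha> w))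
    \<and> (\<forall>u\<in>carrier_vec n. asym_trace \<pi> \<Lambda> d \<rho> va f st b' n (\<alpha> u) = asym_trace \<pi> \<Lambda> d \<rho> va f st b n u)
    \<and> (\<forall>u\<in>carrier_vec n. \<alpha> (asym_star st b n u) = asym_star st b' n (\<alpha> u))"
proof -
  have alg: "K_algebra sc" using ssimple unfolding split_semisimple_def by blast
  interpret star_basis_change sc \<tau> st b b' n A
    using alg trace_form star B B' base_change by unfold_locales
  have AO: "\<forall>i<n. \<forall>j<n. A $$ (i, j) \<in> val_ring \<nu>" using entries_in_val_ring[OF val res freal] by blast
  define P where "P = map_mat \<pi> A"
  have P: "P \<in> carrier_mat n n" and P_entry: "\<And>i j. i < n \<Longrightarrow> j < n \<Longrightarrow> P $$ (i, j) = \<pi> (A $$ (i, j))"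
    using A by (auto simp: P_def)
  have PPT: "P * P\<^sup>T = 1\<^sub>m n"
    unfolding P_def using residue_mat_orthogonal[OF val res A AO mat_mult_transpose_eq_one[OF A]] .
  have PTP: "P\<^sup>T * P = 1\<^sub>m n" using mat_mult_left_right_inverse[OF P _ PPT] P by simp
  note \<sigma> = involution_on_star_idx[OF B star] and \<sigma>' = involution_on_star_idx[OF B' star]
  note compat = map_mat_star_idx_compat[OF A, of _ _ \<pi>, folded P_def]
  have reps: "\<forall>lam\<in>\<Lambda>. is_rep sc (d lam) (\<rho> lam)" using irr unfolding irreducible_rep_def by blast
  have bO: "\<forall>lam\<in>\<Lambda>. \<forall>j<n. \<forall>s<d lam. \<forall>t<d lam. va lam * \<rho> lam (b j) $$ (s, t) \<in> val_ring \<nu>"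
  proof (intro ballI allI impI)
    fix lam j s t assume "lam \<in> \<Lambda>" "j < n" "s < d lam" "t < d lam"
    moreover have "a lam \<in> gen_subgroup (a ` \<Lambda>)" using \<open>lam \<in> \<Lambda>\<close> by (intro gen_subgroup.gen) simp
    ultimately show "va lam * \<rho> lam (b j) $$ (s, t) \<in> val_ring \<nu>"
      using mult_in_val_ring_if_valge[OF val] v_val balanced B unfolding va_def by metis
  qed
  have st_bO: "\<forall>lam\<in>\<Lambda>. \<forall>j<n. \<forall>s<d lam. \<forall>t<d lam. va lam * \<rho> lam (st (b j)) $$ (s, t) \<in> val_ring \<nu>"
    using bO star_idx_less[OF B] basis_star_idx[OF B] by metis
  have \<gamma>': "asym_gamma \<pi> \<Lambda> d \<rho> va f (b' i) (b' j) (b' l) = (\<Sum>p<n. P $$ (i, p) * (\<Sum>q<n. P $$ (j, q) *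
      (\<Sum>r<n. P $$ (l, r) * asym_gamma \<pi> \<Lambda> d \<rho> va f (b p) (b q) (b r))))" if "i < n" "j < n" "l < n" for i j l
    using asym_gamma_combination[OF val res reps _ bO, of "\<lambda>p. A $$ (i, p)" "\<lambda>q. A $$ (j, q)" "\<lambda>r. A $$ (l, r)"]
      base_change AO P_entry that by simp
  have n': "asym_n \<pi> \<Lambda> d \<rho> va f (st (b' i)) = (\<Sum>m<n. P $$ (i, m) * asym_n \<pi> \<Lambda> d \<rho> va f (st (b m)))"
    if "i < n" for i
    using asym_n_combination[OF val res reps _ st_bO, of "\<lambda>m. A $$ (i, m)"] star_base_change AO P_entry that
    by simp
  have "\<alpha> = (\<lambda>u. P *\<^sub>v u)" unfolding \<alpha>_def P_def ..
  then show ?thesis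
    using AO mat_mult_transpose_eq_one[OF A] orthogonal_mult_mat_vec_bij[OF P PPT PTP]
      orthogonal_structure_constants_transport[OF P PTP \<sigma> \<sigma>' compat \<gamma>']
      orthogonal_pairing_transport[OF P PTP] n' involution_compatible_transport[OF P \<sigma> \<sigma>' compat]
    by (simp add: asym_mult_eq_structure_constants[OF \<sigma>] asym_mult_eq_structure_constants[OF \<sigma>']
        asym_star_eq_reindex[OF \<sigma>] asym_star_eq_reindex[OF \<sigma>'] asym_trace_def)
qed

end
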